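(* Let $\mathbf{AUS}_3$ be the set of density matrices $\sigma$ on $\mathbb{C}^2\otimes\mathbb{C}^2$ such that for every unitary $U$ on $\mathbb{C}^2\otimes\mathbb{C}^2$, every choice of unit vectors $\hat u_1,\hat u_2,\hat u_3\in\mathbb{R}^3$ and every choice of orthonormal vectors $\hat v_1,\hat v_2,\hat v_3\in\mathbb{R}^3$, $$\frac{1}{\sqrt3}\Big|\sum_{i=1}^3\mathrm{Tr}\big(U\sigma U^\dagger\,(\hat u_i\cdot\vec s)\otimes(\hat v_i\cdot\vec s)\big)\Big|\le 1.$$ Let $|\Upsilon\rangle_{ABC}\in\mathbb{C}^2\otimes\mathbb{C}^2\otimes\mathbb{C}^2$ be any pure three-qubit state, with reduced states $\sigma_{AB}=\mathrm{Tr}_C|\Upsilon\rangle\langle\Upsilon|$ and $\sigma_C=\mathrm{Tr}_{AB}|\Upsilon\rangle\langle\Upsilon|$. Then $\sigma_{AB}\in\mathbf{AUS}_3$ if and only if $\sigma_C=I/2$ is the maximally mixed state.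
   Context: $\vec{s}=(s_1,s_2,s_3)$ denotes the vector of Pauli matrices, and for $\hat w\in\mathbb{R}^3$, $\hat w\cdot\vec s=\sum_k w_k s_k$. *)

theory Defs
  imports "HOL-Analysis.Analysis"
begin

definition cadj :: "complex^'n^'m \<Rightarrow> complex^'m^'n" where
  "cadj A = (\<chi> i j. cnj (A $ j $ i))"

definition mtrace :: "complex^'n^'n \<Rightarrow> complex" where
  "mtrace A = (\<Sum>i\<in>UNIV. A $ i $ i)"

definition kron :: "complex^'n^'n \<Rightarrow> complex^'m^'m \<Rightarrow> complex^('n \<times> 'm)^('n \<times> 'm)" where
  "kron A B = (\<chi> p q. A $ fst p $ fst q * B $ snd p $ snd q)"

definition unitary_mat :: "complex^'n^'n \<Rightarrow> bool" where
  "unitary_mat U \<longleftrightarrow> U ** cadj U = mat 1 \<and> cadj U ** U = mat 1"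

definition hermitian_mat :: "complex^'n^'n \<Rightarrow> bool" where
  "hermitian_mat A \<longleftrightarrow> cadj A = A"

definition density_mat :: "complex^'n^'n \<Rightarrow> bool" where
  "density_mat A \<longleftrightarrow> hermitian_mat A
     \<and> (\<forall>v::complex^'n. 0 \<le> Re (\<Sum>i\<in>UNIV. \<Sum>j\<in>UNIV. cnj (v $ i) * A $ i $ j * v $ j))
     \<and> mtrace A = 1"

text \<open>Pauli matrices (index type 2 has elements 0,1; the basis |0>,|1> corresponds to 0,1).\<close>
definition sx :: "complex^2^2" where
  "sx = (\<chi> i j. if i \<noteq> j then 1 else 0)"
definition sy :: "complex^2^2" where
  "sy = (\<chi> i j. if i = 0 \<and> j = 1 then - \<i> else if i = 1 \<and> j = 0 then \<i> else 0)"
definition sz :: "complex^2^2" where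
  "sz = (\<chi> i j. if i = j then (if i = 0 then 1 else -1) else 0)"

text \<open>Components of real^3 are indexed by type 3 with elements 0,1,2 = coordinates 1,2,3.\<close>
definition pauli :: "3 \<Rightarrow> complex^2^2" where
  "pauli k = (if k = 0 then sx else if k = 1 then sy else sz)"

definition pdot :: "real^3 \<Rightarrow> complex^2^2" where
  "pdot w = (\<chi> i j. \<Sum>k\<in>UNIV. complex_of_real (w $ k) * pauli k $ i $ j)"

definition AUS3 :: "(complex^(2\<times>2)^(2\<times>2)) set" where
  "AUS3 = {\<sigma>. density_mat \<sigma> \<and>
     (\<forall>(U::complex^(2\<times>2)^(2\<times>2)) (u::nat \<Rightarrow> real^3) (v::nat \<Rightarrow> real^3).
        unitary_mat U \<and> (\<forall>i\<in>{1..3}. norm (u i) = 1)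
        \<and> (\<forall>i\<in>{1..3}. \<forall>j\<in>{1..3}. v i \<bullet> v j = (if i = j then 1 else 0))
        \<longrightarrow> (1 / sqrt 3) * cmod (\<Sum>i=1..3. mtrace (U ** \<sigma> ** cadj U ** kron (pdot (u i)) (pdot (v i)))) \<le> 1)}"

definition outer :: "complex^'n \<Rightarrow> complex^'n^'n" where
  "outer x = (\<chi> i j. x $ i * cnj (x $ j))"

definition ptrace2 :: "complex^('a::finite \<times> 'b::finite)^('a \<times> 'b) \<Rightarrow> complex^'a^'a" where
  "ptrace2 R = (\<chi> i j. \<Sum>k\<in>UNIV. R $ (i, k) $ (j, k))"
definition ptrace1 :: "complex^('a::finite \<times> 'b::finite)^('a \<times> 'b) \<Rightarrow> complex^'b^'b" where
  "ptrace1 R = (\<chi> i j. \<Sum>k\<in>UNIV. R $ (k, i) $ (k, j))"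

definition maxmixed2 :: "complex^2^2" where
  "maxmixed2 = (\<chi> i j. if i = j then 1/2 else 0)"

end

theory Submission
  imports Defs
begin

text \<open>
  Write \<open>\<Upsilon> = a \<otimes> |0\<rangle> + b \<otimes> |1\<rangle>\<close>. Then \<open>\<sigma>\<^sub>A\<^sub>B = |a\<rangle>\<langle>a| + |b\<rangle>\<langle>b|\<close> and \<open>\<sigma>\<^sub>C\<close> is the
  Gram matrix of \<open>a, b\<close>, so \<open>\<sigma>\<^sub>C = I/2\<close> means that \<open>a\<close> and \<open>b\<close> are orthogonal of squared norm
  \<open>1/2\<close>.

  In that case \<open>U \<sigma>\<^sub>A\<^sub>B U\<^sup>\<dagger> = P\<close> is half a rank-two projection. The operator
  \<open>W = \<Sum>\<^sub>i (u\<^sub>i\<cdot>s) \<otimes> (v\<^sub>i\<cdot>s)\<close> is traceless and, the \<open>v\<^sub>i\<close> being orthonormal, has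
  Hilbert--Schmidt norm \<open>\<surd>12\<close>; Cauchy--Schwarz gives
  \<open>|Tr (P W)| = |Tr ((P - I/4) W)| \<le> \<parallel>P - I/4\<parallel> \<parallel>W\<parallel> = \<surd>12 / 2 = \<surd>3\<close>.

  Otherwise a Gram--Schmidt step and two Householder reflections move \<open>a, b\<close> into the span of
  the Bell states \<open>\<Phi>\<^sup>+, \<Phi>\<^sup>-\<close> with weight excess \<open>t > 0\<close> on \<open>\<Phi>\<^sup>+\<close>. For a suitable
  orthonormal frame \<open>v\<^sub>i\<close> and \<open>u\<^sub>i = diag(d, -d, e) v\<^sub>i\<close> the operator \<open>W\<close> acts on \<open>\<Phi>\<^sup>\<plusminus>\<close>
  as \<open>e \<plusminus> 2d\<close>, and \<open>d = t\<close>, \<open>e = \<surd>(3 - 2t\<^sup>2)\<close> give the value \<open>e + 2t\<^sup>2 > \<surd>3\<close>.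
\<close>

lemma UNIV_2_eq: "(UNIV::2 set) = {0, 1}"
proof -
  have "(2::2) = 0" by simp
  then have "(UNIV::2 set) = {1, 0}" using UNIV_2 by (simp only:)
  then show ?thesis by blast
qed

lemma sum_UNIV_2: "sum f (UNIV::2 set) = f 0 + f 1"
  unfolding UNIV_2_eq by simp

lemma all_2_iff: "(\<forall>i::2. P i) \<longleftrightarrow> P 0 \<and> P 1"
proof -
  have "i = 0 \<or> i = 1" for i :: 2
    using UNIV_I[of i] unfolding UNIV_2_eq by blast
  then show ?thesis by metis
qed

lemma UNIV_3_eq: "(UNIV::3 set) = {0, 1, 2}"
proof -
  have "(3::3) = 0" by simp
  then have "(UNIV::3 set) = {1, 2, 0}" using UNIV_3 by (simp only:)
  then show ?thesis by blast
qed

lemma numeral_3_neq: "(0::3) \<noteq> 1" "(0::3) \<noteq> 2" "(1::3) \<noteq> 2" "(1::3) \<noteq> 0" "(2::3) \<noteq> 0" "(2::3) \<noteq> 1"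
  by simp_all

lemma sum_UNIV_3: "sum f (UNIV::3 set) = f 0 + f 1 + f 2"
  unfolding UNIV_3_eq by (simp add: add.assoc)

lemma sum_UNIV_prod: "sum f (UNIV::('a::finite \<times> 'b::finite) set) = (\<Sum>a\<in>UNIV. \<Sum>b\<in>UNIV. f (a, b))"
proof -
  have "(\<Sum>a\<in>UNIV. \<Sum>b\<in>UNIV. f (a, b)) = (\<Sum>p\<in>UNIV \<times> UNIV. f p)"
    by (simp add: sum.cartesian_product)
  then show ?thesis by simp
qed

lemma sum_UNIV_2x2: "sum f (UNIV::(2 \<times> 2) set) = f (0,0) + f (0,1) + f (1,0) + f (1,1)"
  by (simp add: sum_UNIV_prod sum_UNIV_2 add.assoc)

lemma sum_1_3: "sum f {1..3::nat} = f 1 + f 2 + f 3"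
proof -
  have "{1..3::nat} = {1, 2, 3}" by auto
  then show ?thesis by (simp add: add.assoc)
qed

definition cinner :: "complex^'n \<Rightarrow> complex^'n \<Rightarrow> complex" where
  "cinner x y = (\<Sum>i\<in>UNIV. cnj (x $ i) * y $ i)"

lemma cinner_commute: "cnj (cinner x y) = cinner y x"
  by (simp add: cinner_def mult.commute)

lemma cinner_scale_left: "cinner (c *s x) y = cnj c * cinner x y"
  by (simp add: cinner_def sum_distrib_left mult_ac)

lemma cinner_scale_right: "cinner x (c *s y) = c * cinner x y"
  by (simp add: cinner_def sum_distrib_left mult_ac)

lemma cinner_add_left: "cinner (x + y) z = cinner x z + cinner y z"
  by (simp add: cinner_def sum.distrib distrib_right)

lemma cinner_add_right: "cinner z (x + y) = cinner z x + cinner z y"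
  by (simp add: cinner_def sum.distrib distrib_left)

lemma cinner_diff_left: "cinner (x - y) z = cinner x z - cinner y z"
  by (simp add: cinner_def sum_subtractf left_diff_distrib)

lemma cinner_diff_right: "cinner z (x - y) = cinner z x - cinner z y"
  by (simp add: cinner_def sum_subtractf right_diff_distrib)

lemmas cinner_simps = cinner_scale_left cinner_scale_right cinner_add_left cinner_add_right
  cinner_diff_left cinner_diff_right

lemma norm_vec_power2: "(norm x)\<^sup>2 = (\<Sum>i\<in>UNIV. (norm (x $ i))\<^sup>2)"
  by (simp add: norm_vec_def L2_set_def sum_nonneg)

lemma cnj_mult_self: "cnj z * z = complex_of_real ((cmod z)\<^sup>2)"
  by (subst complex_norm_square) (rule mult.commute)

lemma cinner_self: "cinner x x = complex_of_real ((norm x)\<^sup>2)"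
  unfolding cinner_def norm_vec_power2 of_real_sum cnj_mult_self ..

lemma cinner_self_eq_0_iff: "cinner x x = 0 \<longleftrightarrow> x = 0"
  by (simp add: cinner_self)

lemma cinner_adjoint: "cinner (A *v x) y = cinner x (cadj A *v y)"
proof -
  have "cinner (A *v x) y = (\<Sum>i\<in>UNIV. \<Sum>j\<in>UNIV. cnj (A$i$j) * cnj (x$j) * y$i)"
    by (simp add: cinner_def matrix_vector_mult_def sum_distrib_right)
  also have "\<dots> = (\<Sum>j\<in>UNIV. \<Sum>i\<in>UNIV. cnj (A$i$j) * cnj (x$j) * y$i)"
    by (rule sum.swap)
  also have "\<dots> = cinner x (cadj A *v y)"
    by (simp add: cinner_def matrix_vector_mult_def cadj_def sum_distrib_left mult_ac)
  finally show ?thesis .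
qed

lemma cadj_mult: "cadj (A ** B) = cadj B ** cadj A"
  by (simp add: cadj_def matrix_matrix_mult_def vec_eq_iff mult.commute)

lemma cadj_add: "cadj (A + B) = cadj A + cadj B"
  by (simp add: cadj_def vec_eq_iff)

lemma unitary_cinner: "unitary_mat U \<Longrightarrow> cinner (U *v x) (U *v y) = cinner x y"
  by (simp add: cinner_adjoint unitary_mat_def matrix_vector_mul_assoc)

lemma unitary_mult: "unitary_mat U \<Longrightarrow> unitary_mat V \<Longrightarrow> unitary_mat (U ** V)"
  unfolding unitary_mat_def cadj_mult by (metis matrix_mul_assoc matrix_mul_lid matrix_mul_rid)

lemma mult_delta_left:
  fixes i :: "'n::finite"
  shows "(\<Sum>j\<in>UNIV. (if i = j then c else 0) * f j) = c * (f i :: 'a::semiring_1)"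
proof -
  have eq: "(\<lambda>j. (if i = j then c else 0) * f j) = (\<lambda>j. if i = j then c * f j else 0)" by auto
  show ?thesis unfolding eq by simp
qed

lemma mult_delta_right:
  fixes i :: "'n::finite"
  shows "(\<Sum>j\<in>UNIV. f j * (if i = j then c else 0)) = (f i :: 'a::semiring_1) * c"
proof -
  have eq: "(\<lambda>j. f j * (if i = j then c else 0)) = (\<lambda>j. if i = j then f j * c else 0)" by auto
  show ?thesis unfolding eq by simp
qed

section \<open>Unitaries between orthonormal pairs\<close>

definition householder :: "complex^'n \<Rightarrow> complex^'n^'n" where
  "householder x = (\<chi> i j. (if i = j then 1 else 0) - 2 / cinner x x * (x $ i * cnj (x $ j)))"

lemma householder_mult_vec: "householder x *v y = y - (2 / cinner x x * cinner x y) *s x"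
proof -
  define c where "c = 2 / cinner x x"
  have "(householder x *v y) $ i = y $ i - (c * cinner x y) * x $ i" for i
  proof -
    have "(householder x *v y) $ i
        = (\<Sum>j\<in>UNIV. (if i = j then 1 else 0) * y $ j) - (\<Sum>j\<in>UNIV. c * (x $ i * cnj (x $ j)) * y $ j)"
      unfolding householder_def matrix_vector_mult_def c_def[symmetric]
      by (simp only: vec_lambda_beta left_diff_distrib sum_subtractf)
    also have "\<dots> = y $ i - (c * cinner x y) * x $ i"
      unfolding mult_delta_left by (simp add: cinner_def sum_distrib_left mult_ac)
    finally show ?thesis .
  qed
  then show ?thesis by (simp add: vec_eq_iff c_def)
qed

lemma cadj_householder: "cadj (householder x) = householder x"
proof -
  have "cnj (cinner x x) = cinner x x" by (simp add: cinner_commute)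
  then show ?thesis by (simp add: householder_def cadj_def vec_eq_iff mult_ac)
qed

lemma householder_involution: "householder x ** householder x = mat 1"
proof -
  have "householder x *v (householder x *v y) = y" for y
  proof (cases "x = 0")
    case False
    then have "cinner x x \<noteq> 0" by (simp add: cinner_self_eq_0_iff)
    then show ?thesis
      by (simp add: householder_mult_vec cinner_simps vec_eq_iff field_simps)
  qed (simp add: householder_mult_vec cinner_def)
  then show ?thesis
    by (simp add: matrix_eq matrix_vector_mul_assoc)
qed

lemma unitary_householder: "unitary_mat (householder x)"
  by (simp add: unitary_mat_def cadj_householder householder_involution)

lemma householder_fixes_orthogonal: "cinner x w = 0 \<Longrightarrow> householder x *v w = w"
  by (simp add: householder_mult_vec)

lemma householder_swaps:
  assumes "cinner y y = cinner e e" and "cnj (cinner e y) = cinner e y"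
  shows "householder (y - e) *v y = e"
proof -
  have "cinner y e = cinner e y" using assms(2) by (simp add: cinner_commute)
  then have xx: "cinner (y - e) (y - e) = 2 * cinner (y - e) y"
    using assms(1) by (simp add: cinner_simps algebra_simps)
  show ?thesis
  proof (cases "y - e = 0")
    case False
    then have "2 / cinner (y - e) (y - e) * cinner (y - e) y = 1"
      using xx cinner_self_eq_0_iff[of "y - e"] by (simp add: field_simps)
    then show ?thesis by (simp add: householder_mult_vec)
  qed (simp add: householder_mult_vec cinner_def)
qed

lemma exists_phase_real: "\<exists>p. cmod p = 1 \<and> cnj (p * a) = p * a"
proof (cases "a = 0")
  case False
  define p where "p = cnj a / complex_of_real (cmod a)"
  have "a * cnj a = complex_of_real (cmod a) * complex_of_real (cmod a)"
    by (metis complex_norm_square of_real_mult power2_eq_square)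
  then have "p * a = complex_of_real (cmod a)"
    using False by (simp add: p_def field_simps)
  moreover have "cmod p = 1" using False by (simp add: p_def norm_divide)
  ultimately show ?thesis by (intro exI[of _ p]) simp
qed (intro exI[of _ 1], simp)

lemma unitary_maps_to_phase:
  fixes y e :: "complex^'n"
  assumes "cinner y y = cinner e e"
  shows "\<exists>H w. unitary_mat H \<and> cmod w = 1 \<and> H *v y = w *s e
    \<and> (\<forall>z. cinner y z = 0 \<and> cinner e z = 0 \<longrightarrow> H *v z = z)"
proof -
  obtain p where p: "cmod p = 1" "cnj (p * cinner e y) = p * cinner e y"
    using exists_phase_real by blast
  have "p * cnj p = 1" using p(1) complex_norm_square[of p] by simp
  then have pp: "cnj p * p = 1" "p * cnj p = 1" by (simp_all add: mult.commute)
  define H where "H = householder (p *s y - e)"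
  have Hpy: "H *v (p *s y) = e"
    unfolding H_def using assms p(2) pp
    by (intro householder_swaps) (simp_all add: cinner_simps mult.assoc[symmetric])
  have "H *v y = H *v ((cnj p * p) *s y)" using pp(1) by simp
  also have "\<dots> = cnj p *s (H *v (p *s y))"
    by (simp add: vector_scalar_commute vector_smult_assoc)
  also have "\<dots> = cnj p *s e" by (simp only: Hpy)
  finally have "H *v y = cnj p *s e" .
  moreover have "H *v z = z" if "cinner y z = 0" "cinner e z = 0" for z
    unfolding H_def using that by (simp add: householder_fixes_orthogonal cinner_simps)
  ultimately show ?thesis using p(1)
    by (intro exI[of _ H] exI[of _ "cnj p"]) (simp add: H_def unitary_householder)
qed

lemma unitary_maps_orthonormal_pair:
  fixes y1 y2 e1 e2 :: "complex^'n"
  assumes "cinner y1 y1 = 1" "cinner y2 y2 = 1" "cinner y1 y2 = 0"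
    and "cinner e1 e1 = 1" "cinner e2 e2 = 1" "cinner e1 e2 = 0"
  shows "\<exists>U w1 w2. unitary_mat U \<and> cmod w1 = 1 \<and> cmod w2 = 1
    \<and> U *v y1 = w1 *s e1 \<and> U *v y2 = w2 *s e2"
proof -
  obtain H1 w1 where H1: "unitary_mat H1" "cmod w1 = 1" "H1 *v y1 = w1 *s e1"
    using unitary_maps_to_phase[of y1 e1] assms(1,4) by auto
  define z where "z = H1 *v y2"
  have "cnj w1 * cinner e1 z = cinner (H1 *v y1) (H1 *v y2)"
    by (simp add: H1(3) z_def cinner_simps)
  also have "\<dots> = 0" using assms(3) by (simp add: unitary_cinner H1(1))
  finally have e1z: "cinner e1 z = 0" using H1(2) by auto
  have zz: "cinner z z = cinner e2 e2"
    using assms(2,5) by (simp add: z_def unitary_cinner H1(1))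
  obtain H2 w2 where H2: "unitary_mat H2" "cmod w2 = 1" "H2 *v z = w2 *s e2"
    and fix2: "\<And>x. cinner z x = 0 \<and> cinner e2 x = 0 \<Longrightarrow> H2 *v x = x"
    using unitary_maps_to_phase[OF zz] by blast
  have "H2 *v e1 = e1"
    using fix2 e1z assms(6) by (metis cinner_commute complex_cnj_zero)
  then have "(H2 ** H1) *v y1 = w1 *s e1"
    by (simp add: matrix_vector_mul_assoc[symmetric] H1(3) vector_scalar_commute)
  moreover have "(H2 ** H1) *v y2 = w2 *s e2"
    by (simp add: matrix_vector_mul_assoc[symmetric] z_def[symmetric] H2(3))
  ultimately show ?thesis
    using H1 H2 by (intro exI[of _ "H2 ** H1"] exI[of _ w1] exI[of _ w2]) (simp add: unitary_mult)
qed

text \<open>A spin flip of the last qubit. It supplies a unit vector orthogonal to a given one, which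
  Gram--Schmidt needs when the second vector depends on the first.\<close>
definition companion :: "complex^('a::finite \<times> 2) \<Rightarrow> complex^('a \<times> 2)" where
  "companion y = (\<chi> p. if snd p = 0 then - cnj (y $ (fst p, 1)) else cnj (y $ (fst p, 0)))"

lemma cinner_companion:
  fixes y :: "complex^('a::finite \<times> 2)"
  shows "cinner y (companion y) = 0" "cinner (companion y) (companion y) = cinner y y"
  unfolding cinner_def sum_UNIV_prod sum_UNIV_2 companion_def by (simp_all add: algebra_simps)

lemma cinner_normalize:
  "x \<noteq> 0 \<Longrightarrow> cinner ((1 / complex_of_real (norm x)) *s x) ((1 / complex_of_real (norm x)) *s x) = 1"
  unfolding cinner_scale_left cinner_scale_right by (simp add: cinner_self power2_eq_square)

lemma scale_normalize: "x \<noteq> 0 \<Longrightarrow> x = complex_of_real (norm x) *s ((1 / complex_of_real (norm x)) *s x)"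
  by (simp add: vector_smult_assoc)

lemma orthonormal_pair_spanning:
  fixes \<phi> \<xi> :: "complex^('a::finite \<times> 2)"
  assumes "\<phi> \<noteq> 0"
  shows "\<exists>y1 y2 c0 c1 c2. cinner y1 y1 = 1 \<and> cinner y2 y2 = 1 \<and> cinner y1 y2 = 0
    \<and> \<phi> = c0 *s y1 \<and> \<xi> = c1 *s y1 + c2 *s y2"
proof -
  define y1 where "y1 = (1 / complex_of_real (norm \<phi>)) *s \<phi>"
  have y1: "cinner y1 y1 = 1" "\<phi> = complex_of_real (norm \<phi>) *s y1"
    using assms cinner_normalize scale_normalize by (auto simp: y1_def)
  define r where "r = \<xi> - cinner y1 \<xi> *s y1"
  have y1r: "cinner y1 r = 0" by (simp add: r_def cinner_simps y1(1))
  obtain y2 c2 where y2: "cinner y2 y2 = 1" "cinner y1 y2 = 0" "r = c2 *s y2"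
  proof (cases "r = 0")
    case True
    then show ?thesis using that[of "companion y1" 0] by (simp add: cinner_companion y1(1))
  next
    case False
    define y2 where "y2 = (1 / complex_of_real (norm r)) *s r"
    show ?thesis
      using that[of y2 "complex_of_real (norm r)"] False cinner_normalize[OF False] scale_normalize[OF False]
      by (simp add: y2_def cinner_simps y1r)
  qed
  have "\<xi> = cinner y1 \<xi> *s y1 + r" by (simp add: r_def)
  then have "\<xi> = cinner y1 \<xi> *s y1 + c2 *s y2" by (simp add: y2(3))
  then show ?thesis using y1 y2(1,2) by blast
qed

section \<open>Traces, rank-one operators and the Hilbert--Schmidt pairing\<close>

lemma matrix_add_rdistrib: "(A + B) ** C = A ** C + B ** (C::'a::semiring_1^'n^'k)"
  by (simp add: matrix_matrix_mult_def vec_eq_iff distrib_right sum.distrib)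

lemma mtrace_add: "mtrace (A + B) = mtrace A + mtrace B"
  by (simp add: mtrace_def sum.distrib)

lemma mtrace_diff: "mtrace (A - B) = mtrace A - mtrace B"
  by (simp add: mtrace_def sum_subtractf)

lemma mtrace_mult_sum: "mtrace (M ** sum f I) = (\<Sum>i\<in>I. mtrace (M ** f i))"
  by (induction I rule: infinite_finite_induct)
    (simp_all add: mtrace_def matrix_matrix_mult_def distrib_left sum.distrib)

lemma mtrace_zero [simp]: "mtrace 0 = 0"
  by (simp add: mtrace_def)

lemma mtrace_sum: "mtrace (sum f I) = (\<Sum>i\<in>I. mtrace (f i))"
  by (induction I rule: infinite_finite_induct) (simp_all add: mtrace_add)

lemma matrix_diff_rdistrib: "(A - B) ** C = A ** C - B ** (C::'a::ring_1^'n^'k)"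
  by (simp add: matrix_matrix_mult_def vec_eq_iff left_diff_distrib sum_subtractf)

lemma mtrace_mat_mult: "mtrace (mat c ** A) = c * mtrace A"
  unfolding mtrace_def matrix_matrix_mult_def mat_def vec_lambda_beta mult_delta_left
  by (simp add: sum_distrib_left)

lemma outer_unitary_conj: "A ** outer x ** cadj A = outer (A *v x)"
  unfolding outer_def matrix_matrix_mult_def matrix_vector_mult_def cadj_def
  by (simp add: vec_eq_iff sum_distrib_left sum_distrib_right mult_ac)

lemma cadj_outer: "cadj (outer x) = outer x"
  by (simp add: cadj_def outer_def vec_eq_iff mult.commute)

lemma mtrace_outer: "mtrace (outer x) = cinner x x"
  by (simp add: mtrace_def outer_def cinner_def mult.commute)

lemma mtrace_outer_mult: "mtrace (outer x ** K) = cinner x (K *v x)"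
proof -
  have "mtrace (outer x ** K) = (\<Sum>i\<in>UNIV. \<Sum>j\<in>UNIV. x$i * cnj (x$j) * K$j$i)"
    by (simp add: mtrace_def outer_def matrix_matrix_mult_def)
  also have "\<dots> = (\<Sum>j\<in>UNIV. \<Sum>i\<in>UNIV. x$i * cnj (x$j) * K$j$i)" by (rule sum.swap)
  also have "\<dots> = cinner x (K *v x)"
    by (simp add: cinner_def matrix_vector_mult_def sum_distrib_left mult_ac)
  finally show ?thesis .
qed

lemma quadratic_form_outer:
  "(\<Sum>i\<in>UNIV. \<Sum>j\<in>UNIV. cnj (v $ i) * outer x $ i $ j * v $ j) = complex_of_real ((cmod (cinner v x))\<^sup>2)"
proof -
  have "(\<Sum>i\<in>UNIV. \<Sum>j\<in>UNIV. cnj (v $ i) * outer x $ i $ j * v $ j)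
      = (\<Sum>i\<in>UNIV. \<Sum>j\<in>UNIV. (cnj (v $ i) * x $ i) * (cnj (x $ j) * v $ j))"
    by (simp add: outer_def mult_ac)
  also have "\<dots> = cinner v x * cinner x v"
    by (simp only: sum_product cinner_def)
  finally show ?thesis by (simp only: complex_norm_square cinner_commute[of v x])
qed

lemma density_mat_outer_pair:
  assumes "cinner a a + cinner b b = 1"
  shows "density_mat (outer a + outer b)"
  unfolding density_mat_def hermitian_mat_def
proof (intro conjI allI)
  show "cadj (outer a + outer b) = outer a + outer b"
    by (simp add: cadj_add cadj_outer)
  show "0 \<le> Re (\<Sum>i\<in>UNIV. \<Sum>j\<in>UNIV. cnj (v $ i) * (outer a + outer b) $ i $ j * v $ j)" for v
    by (simp add: distrib_left distrib_right sum.distrib quadratic_form_outer del: of_real_power)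
  show "mtrace (outer a + outer b) = 1"
    using assms by (simp add: mtrace_add mtrace_outer)
qed

definition hs_inner :: "complex^'n^'m \<Rightarrow> complex^'n^'m \<Rightarrow> complex" where
  "hs_inner X Y = (\<Sum>i\<in>UNIV. \<Sum>j\<in>UNIV. X $ i $ j * cnj (Y $ i $ j))"

lemma hs_inner_self: "hs_inner X X = complex_of_real ((norm X)\<^sup>2)"
  unfolding hs_inner_def norm_vec_power2 of_real_sum complex_norm_square ..

lemma hs_inner_commute: "cnj (hs_inner X Y) = hs_inner Y X"
  by (simp add: hs_inner_def mult.commute)

lemma hs_inner_zero_left [simp]: "hs_inner 0 Y = 0"
  by (simp add: hs_inner_def)

lemma hs_inner_zero_right [simp]: "hs_inner Y 0 = 0"
  by (simp add: hs_inner_def)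

lemma hs_inner_add_left: "hs_inner (X + Y) Z = hs_inner X Z + hs_inner Y Z"
  by (simp add: hs_inner_def sum.distrib distrib_right)

lemma hs_inner_add_right: "hs_inner Z (X + Y) = hs_inner Z X + hs_inner Z Y"
  by (simp add: hs_inner_def sum.distrib distrib_left)

lemma hs_inner_diff_left: "hs_inner (X - Y) Z = hs_inner X Z - hs_inner Y Z"
  by (simp add: hs_inner_def sum_subtractf left_diff_distrib)

lemma hs_inner_diff_right: "hs_inner Z (X - Y) = hs_inner Z X - hs_inner Z Y"
  by (simp add: hs_inner_def sum_subtractf right_diff_distrib)

lemma hs_inner_sum_left: "hs_inner (sum f I) Y = (\<Sum>i\<in>I. hs_inner (f i) Y)"
  by (induction I rule: infinite_finite_induct) (simp_all add: hs_inner_add_left)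

lemma hs_inner_sum_right: "hs_inner Y (sum f I) = (\<Sum>i\<in>I. hs_inner Y (f i))"
  by (induction I rule: infinite_finite_induct) (simp_all add: hs_inner_add_right)

lemma hs_inner_outer: "hs_inner (outer a) (outer b) = cinner b a * cinner a b"
  by (simp add: hs_inner_def outer_def cinner_def sum_product mult_ac)

lemma hs_inner_mat_right: "hs_inner X (mat c) = cnj c * mtrace X"
proof -
  have "hs_inner X (mat c) = (\<Sum>i\<in>UNIV. \<Sum>j\<in>UNIV. X $ i $ j * (if i = j then cnj c else 0))"
    unfolding hs_inner_def mat_def by (intro sum.cong refl) simp
  also have "\<dots> = cnj c * mtrace X"
    unfolding mult_delta_right by (simp add: mtrace_def sum_distrib_left mult.commute)
  finally show ?thesis .
qed

lemma hs_inner_mat_mat: "hs_inner (mat c :: complex^'n^'n) (mat c) = of_nat CARD('n) * (c * cnj c)"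
  unfolding hs_inner_mat_right by (simp add: mtrace_def mat_def)

lemma hs_inner_kron: "hs_inner (kron A B) (kron A' B') = hs_inner A A' * hs_inner B B'"
  by (simp add: hs_inner_def kron_def sum_UNIV_prod sum_product mult_ac)

lemma norm_sum_mult_le:
  "cmod (\<Sum>x\<in>A. f x * g x) \<le> sqrt (\<Sum>x\<in>A. (cmod (f x))\<^sup>2) * sqrt (\<Sum>x\<in>A. (cmod (g x))\<^sup>2)"
proof -
  have "cmod (\<Sum>x\<in>A. f x * g x) \<le> (\<Sum>x\<in>A. \<bar>cmod (f x)\<bar> * \<bar>cmod (g x)\<bar>)"
    by (simp add: norm_mult sum_norm_le)
  also have "\<dots> \<le> L2_set (\<lambda>x. cmod (f x)) A * L2_set (\<lambda>x. cmod (g x)) A"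
    by (rule L2_set_mult_ineq)
  finally show ?thesis by (simp add: L2_set_def)
qed

lemma norm_mtrace_mult_le: "cmod (mtrace (A ** B)) \<le> norm A * norm (B :: complex^'n^'n)"
proof -
  have sq: "sqrt (\<Sum>p\<in>UNIV. (cmod (X $ fst p $ snd p))\<^sup>2) = norm X" for X :: "complex^'n^'n"
    by (simp add: norm_vec_power2[symmetric] sum_UNIV_prod)
  have "mtrace (A ** B) = (\<Sum>p\<in>UNIV. A $ fst p $ snd p * B $ snd p $ fst p)"
    by (simp add: mtrace_def matrix_matrix_mult_def sum_UNIV_prod)
  also have "cmod \<dots> \<le> norm A * sqrt (\<Sum>p\<in>UNIV. (cmod (B $ snd p $ fst p))\<^sup>2)"
    using norm_sum_mult_le[of "\<lambda>p. A $ fst p $ snd p" "\<lambda>p. B $ snd p $ fst p" UNIV]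
    by (simp only: sq)
  also have "(\<Sum>p\<in>UNIV. (cmod (B $ snd p $ fst p))\<^sup>2) = (\<Sum>p\<in>UNIV. (cmod (B $ fst p $ snd p))\<^sup>2)"
    by (simp add: sum_UNIV_prod) (rule sum.swap)
  finally show ?thesis by (simp only: sq)
qed

section \<open>Pauli operators and the correlation operator\<close>

lemma mtrace_kron: "mtrace (kron A B) = mtrace A * mtrace B"
  by (simp add: mtrace_def kron_def sum_UNIV_prod sum_product)

lemma pdot_nth:
  "pdot w $ 0 $ 0 = complex_of_real (w $ 2)"
  "pdot w $ 1 $ 1 = - complex_of_real (w $ 2)"
  "pdot w $ 0 $ 1 = complex_of_real (w $ 0) - \<i> * complex_of_real (w $ 1)"
  "pdot w $ 1 $ 0 = complex_of_real (w $ 0) + \<i> * complex_of_real (w $ 1)"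
  by (simp_all add: pdot_def sum_UNIV_3 pauli_def sx_def sy_def sz_def)

lemma mtrace_pdot: "mtrace (pdot w) = 0"
  by (simp add: mtrace_def sum_UNIV_2 pdot_nth)

lemma hs_inner_pdot: "hs_inner (pdot u) (pdot u') = 2 * complex_of_real (u \<bullet> u')"
  by (simp add: hs_inner_def sum_UNIV_2 pdot_nth inner_vec_def sum_UNIV_3 algebra_simps)

definition unit_triple :: "(nat \<Rightarrow> real^3) \<Rightarrow> bool" where
  "unit_triple u \<longleftrightarrow> (\<forall>i\<in>{1..3}. norm (u i) = 1)"

definition orthonormal_triple :: "(nat \<Rightarrow> real^3) \<Rightarrow> bool" where
  "orthonormal_triple v \<longleftrightarrow> (\<forall>i\<in>{1..3}. \<forall>j\<in>{1..3}. v i \<bullet> v j = (if i = j then 1 else 0))"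

definition correlation_operator :: "(nat \<Rightarrow> real^3) \<Rightarrow> (nat \<Rightarrow> real^3) \<Rightarrow> complex^(2\<times>2)^(2\<times>2)" where
  "correlation_operator u v = (\<Sum>i=1..3. kron (pdot (u i)) (pdot (v i)))"

lemma mtrace_correlation_operator: "mtrace (correlation_operator u v) = 0"
  by (simp add: correlation_operator_def mtrace_sum mtrace_kron mtrace_pdot)

lemma norm_correlation_operator:
  assumes "unit_triple u" and "orthonormal_triple v"
  shows "norm (correlation_operator u v) = 2 * sqrt 3"
proof -
  have uu: "u i \<bullet> u i = 1" if "i \<in> {1..3}" for i
    using assms(1) that by (simp add: unit_triple_def power2_norm_eq_inner[symmetric])
  have vv: "v i \<bullet> v j = (if i = j then 1 else 0)" if "i \<in> {1..3}" "j \<in> {1..3}" for i j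
    using assms(2) that by (simp add: orthonormal_triple_def)
  have "complex_of_real ((norm (correlation_operator u v))\<^sup>2)
      = hs_inner (correlation_operator u v) (correlation_operator u v)"
    by (rule hs_inner_self[symmetric])
  also have "\<dots> = (\<Sum>i=1..3. \<Sum>j=1..3. 4 * complex_of_real ((u j \<bullet> u i) * (v j \<bullet> v i)))"
    by (simp add: correlation_operator_def hs_inner_sum_left hs_inner_sum_right hs_inner_kron
        hs_inner_pdot)
  also have "\<dots> = 12"
    unfolding sum_1_3 by (simp add: uu vv)
  finally have "(norm (correlation_operator u v))\<^sup>2 = 12"
    by (metis of_real_eq_iff of_real_numeral)
  also have "12 = (2 * sqrt 3)\<^sup>2"
    by (simp add: power_mult_distrib)
  finally show ?thesis
    by (rule power2_eq_imp_eq) simp_all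
qed

lemma correlation_bound_orthogonal_pair:
  fixes a b :: "complex^(2\<times>2)"
  assumes "cinner a a = 1/2" "cinner b b = 1/2" "cinner a b = 0"
    and "unit_triple u" "orthonormal_triple v"
  shows "cmod (mtrace ((outer a + outer b) ** correlation_operator u v)) \<le> sqrt 3"
proof -
  define P where "P = outer a + outer b"
  define D :: "complex^(2\<times>2)^(2\<times>2)" where "D = mat (1/4)"
  define W where "W = correlation_operator u v"
  have ba: "cinner b a = 0" using assms(3) cinner_commute[of a b] by simp
  have trP: "mtrace P = 1" by (simp add: P_def mtrace_add mtrace_outer assms(1,2))
  have PP: "hs_inner P P = 1/2"
    by (simp add: P_def hs_inner_add_left hs_inner_add_right hs_inner_outer assms(1-3) ba)
  have PD: "hs_inner P D = 1/4" by (simp add: D_def hs_inner_mat_right trP)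
  have DP: "hs_inner D P = 1/4" unfolding hs_inner_commute[of P D, symmetric] PD by simp
  have DD: "hs_inner D D = 1/4" by (simp add: D_def hs_inner_mat_mat)
  have "complex_of_real ((norm (P - D))\<^sup>2) = hs_inner (P - D) (P - D)"
    by (rule hs_inner_self[symmetric])
  also have "\<dots> = 1/4"
    by (simp add: hs_inner_diff_left hs_inner_diff_right PP PD DP DD)
  finally have "complex_of_real ((norm (P - D))\<^sup>2) = 1/4" .
  from arg_cong[OF this, of Re] have "(norm (P - D))\<^sup>2 = 1/4"
    by (simp only: Re_complex_of_real) simp
  then have "(norm (P - D))\<^sup>2 = (1/2)\<^sup>2"
    by (simp add: power2_eq_square)
  then have nPD: "norm (P - D) = 1/2"
    by (rule power2_eq_imp_eq) simp_all
  have "mtrace (P ** W) = mtrace ((P - D) ** W)"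
    by (simp add: matrix_diff_rdistrib mtrace_diff D_def mtrace_mat_mult W_def mtrace_correlation_operator)
  then have "cmod (mtrace (P ** W)) \<le> norm (P - D) * norm W"
    by (simp only: norm_mtrace_mult_le)
  also have "\<dots> = sqrt 3"
    using assms(4,5) by (simp add: nPD W_def norm_correlation_operator)
  finally show ?thesis by (simp add: P_def W_def)
qed

section \<open>A violating choice of observables\<close>

definition bell_plus :: "complex^(2\<times>2)" where
  "bell_plus = (\<chi> p. if p = (0,0) \<or> p = (1,1) then complex_of_real (sqrt (1/2)) else 0)"

definition bell_minus :: "complex^(2\<times>2)" where
  "bell_minus = (\<chi> p. if p = (0,0) then complex_of_real (sqrt (1/2))
    else if p = (1,1) then - complex_of_real (sqrt (1/2)) else 0)"

lemma bell_orthonormal: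
  "cinner bell_plus bell_plus = 1" "cinner bell_minus bell_minus = 1" "cinner bell_plus bell_minus = 0"
proof -
  have half: "complex_of_real (sqrt (1/2)) * complex_of_real (sqrt (1/2)) = 1/2"
    by (simp only: of_real_mult[symmetric] real_sqrt_mult_self) simp
  show "cinner bell_plus bell_plus = 1" "cinner bell_minus bell_minus = 1"
    "cinner bell_plus bell_minus = 0"
    by (simp_all add: cinner_def sum_UNIV_2x2 bell_plus_def bell_minus_def half)
qed

lemma sqrt_mult_self_left: "0 \<le> c \<Longrightarrow> sqrt c * (sqrt c * x) = c * x"
  by (simp add: mult.assoc[symmetric])

definition frame_v :: "nat \<Rightarrow> real^3" where
  "frame_v i = (\<chi> k. if k = 0 then (if i = 1 then sqrt (1/2) else if i = 2 then - sqrt (1/2) else 0)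
    else if k = 1 then (if i = 3 then - 2 * sqrt (1/6) else sqrt (1/6)) else sqrt (1/3))"

definition frame_weight :: "real \<Rightarrow> real \<Rightarrow> 3 \<Rightarrow> real" where
  "frame_weight d e k = (if k = 0 then d else if k = 1 then - d else e)"

text \<open>The \<open>frame_v i\<close> are the rows of an orthogonal matrix, so
  \<open>\<Sum>\<^sub>i (u\<^sub>i\<cdot>s) \<otimes> (v\<^sub>i\<cdot>s) = d (s\<^sub>1 \<otimes> s\<^sub>1 - s\<^sub>2 \<otimes> s\<^sub>2) + e s\<^sub>3 \<otimes> s\<^sub>3\<close>.\<close>
definition frame_u :: "real \<Rightarrow> real \<Rightarrow> nat \<Rightarrow> real^3" where
  "frame_u d e i = (\<chi> k. frame_weight d e k * frame_v i $ k)"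

lemma frame_v_nth:
  "frame_v i $ 0 = (if i = 1 then sqrt (1/2) else if i = 2 then - sqrt (1/2) else 0)"
  "frame_v i $ 1 = (if i = 3 then - 2 * sqrt (1/6) else sqrt (1/6))"
  "frame_v i $ 2 = sqrt (1/3)"
  by (simp_all add: frame_v_def numeral_3_neq)

lemma frame_weight_simps: "frame_weight d e 0 = d" "frame_weight d e 1 = - d" "frame_weight d e 2 = e"
  by (simp_all add: frame_weight_def numeral_3_neq)

lemma frame_v_orthonormal: "orthonormal_triple frame_v"
proof -
  have "{1..3::nat} = {1, 2, 3}" by auto
  moreover have "frame_v i \<bullet> frame_v j = (if i = j then 1 else 0)" if "i \<in> {1,2,3}" "j \<in> {1,2,3}" for i j
    using that by (auto simp: inner_vec_def sum_UNIV_3 frame_v_nth algebra_simps sqrt_mult_self_left)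
  ultimately show ?thesis
    unfolding orthonormal_triple_def by simp
qed

lemma frame_v_columns: "(\<Sum>i=1..3. frame_v i $ a * frame_v i $ b) = (if a = b then 1 else 0)"
proof -
  have "a \<in> {0, 1, 2}" "b \<in> {0, 1, 2}" by (simp_all add: UNIV_3_eq[symmetric])
  then show ?thesis
    unfolding sum_1_3 by (auto simp: frame_v_nth numeral_3_neq algebra_simps sqrt_mult_self_left)
qed

lemma frame_u_unit:
  assumes "2 * d\<^sup>2 + e\<^sup>2 = 3"
  shows "unit_triple (frame_u d e)"
proof -
  have "{1..3::nat} = {1, 2, 3}" by auto
  moreover have "frame_u d e i \<bullet> frame_u d e i = 1" if "i \<in> {1,2,3}" for i
    using that assms
    by (auto simp: inner_vec_def sum_UNIV_3 frame_u_def frame_weight_simps frame_v_nth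
        algebra_simps sqrt_mult_self_left power2_eq_square)
  ultimately show ?thesis
    unfolding unit_triple_def by (simp add: norm_eq_sqrt_inner)
qed

lemma frame_correlation:
  "(\<Sum>i=1..3. frame_u d e i $ a * frame_v i $ b) = (if a = b then frame_weight d e a else 0)"
proof -
  have "(\<Sum>i=1..3. frame_u d e i $ a * frame_v i $ b)
      = frame_weight d e a * (\<Sum>i=1..3. frame_v i $ a * frame_v i $ b)"
    by (simp add: frame_u_def sum_distrib_left mult.assoc)
  also have "\<dots> = (if a = b then frame_weight d e a else 0)"
    unfolding frame_v_columns by simp
  finally show ?thesis .
qed

lemma correlation_operator_nth:
  "correlation_operator u v $ p $ q = (\<Sum>a\<in>UNIV. \<Sum>b\<in>UNIV.
    complex_of_real (\<Sum>i=1..3. u i $ a * v i $ b) * (pauli a $ fst p $ fst q * pauli b $ snd p $ snd q))"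
proof -
  have "correlation_operator u v $ p $ q = (\<Sum>i=1..3. \<Sum>a\<in>UNIV. \<Sum>b\<in>UNIV.
      complex_of_real (u i $ a * v i $ b) * (pauli a $ fst p $ fst q * pauli b $ snd p $ snd q))"
    by (simp add: correlation_operator_def kron_def pdot_def sum_product mult_ac)
  also have "\<dots> = (\<Sum>a\<in>UNIV. \<Sum>b\<in>UNIV. \<Sum>i=1..3.
      complex_of_real (u i $ a * v i $ b) * (pauli a $ fst p $ fst q * pauli b $ snd p $ snd q))"
    by (subst sum.swap) (rule sum.cong[OF refl], rule sum.swap)
  finally show ?thesis by (simp add: of_real_sum sum_distrib_right)
qed

lemma correlation_operator_frame_nth:
  "correlation_operator (frame_u d e) frame_v $ p $ q
    = (\<Sum>a\<in>UNIV. complex_of_real (frame_weight d e a) * (pauli a $ fst p $ fst q * pauli a $ snd p $ snd q))"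
proof -
  have delta: "(\<Sum>b\<in>UNIV. complex_of_real (if a = b then c else 0) * f b) = complex_of_real c * f a"
    for a :: 3 and c f
  proof -
    have eq: "(\<lambda>b. complex_of_real (if a = b then c else 0) * f b)
        = (\<lambda>b. if a = b then complex_of_real c * f b else 0)"
      by auto
    show ?thesis unfolding eq by simp
  qed
  show ?thesis
    unfolding correlation_operator_nth frame_correlation delta ..
qed

lemma correlation_operator_frame_bell_columns:
  fixes d e :: real
  defines "W \<equiv> correlation_operator (frame_u d e) frame_v"
  shows "W $ (0,0) $ (0,0) = complex_of_real e" "W $ (0,1) $ (0,0) = 0" "W $ (1,0) $ (0,0) = 0"
    "W $ (1,1) $ (0,0) = complex_of_real (2 * d)" "W $ (0,0) $ (1,1) = complex_of_real (2 * d)"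
    "W $ (0,1) $ (1,1) = 0" "W $ (1,0) $ (1,1) = 0" "W $ (1,1) $ (1,1) = complex_of_real e"
  unfolding W_def
  by (simp_all add: correlation_operator_frame_nth sum_UNIV_3 frame_weight_simps pauli_def sx_def sy_def sz_def)

lemma correlation_operator_frame_bell:
  "correlation_operator (frame_u d e) frame_v *v bell_plus = complex_of_real (e + 2 * d) *s bell_plus"
  "correlation_operator (frame_u d e) frame_v *v bell_minus = complex_of_real (e - 2 * d) *s bell_minus"
  by (simp_all add: vec_eq_iff all_2_iff matrix_vector_mult_def sum_UNIV_2x2 bell_plus_def bell_minus_def
      correlation_operator_frame_bell_columns algebra_simps)

lemma cinner_eigen_pair:
  fixes f1 f2 :: "complex^'n"
  assumes "cinner f1 f1 = 1" "cinner f2 f2 = 1" "cinner f1 f2 = 0"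
    and "W *v f1 = l1 *s f1" "W *v f2 = l2 *s f2"
  shows "cinner (a *s f1 + b *s f2) (W *v (a *s f1 + b *s f2)) = l1 * (cnj a * a) + l2 * (cnj b * b)"
proof -
  have "cinner f2 f1 = 0" using assms(3) cinner_commute[of f1 f2] by simp
  moreover have "W *v (a *s f1 + b *s f2) = (a * l1) *s f1 + (b * l2) *s f2"
    by (simp add: matrix_vector_right_distrib vector_scalar_commute assms(4,5) vector_smult_assoc mult.commute)
  ultimately show ?thesis
    by (simp add: cinner_simps assms(1-3) algebra_simps)
qed

lemma mtrace_frame_bell_pair:
  "mtrace ((outer (a0 *s bell_plus + b0 *s bell_minus) + outer (a1 *s bell_plus + b1 *s bell_minus))
      ** correlation_operator (frame_u d e) frame_v)
    = complex_of_real ((e + 2 * d) * ((cmod a0)\<^sup>2 + (cmod a1)\<^sup>2) + (e - 2 * d) * ((cmod b0)\<^sup>2 + (cmod b1)\<^sup>2))"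
proof -
  note eigen = cinner_eigen_pair[OF bell_orthonormal correlation_operator_frame_bell]
  show ?thesis
    unfolding matrix_add_rdistrib mtrace_add mtrace_outer_mult eigen cnj_mult_self
    by (simp add: algebra_simps)
qed

lemma unitary_to_bell_span:
  fixes \<phi> \<xi> :: "complex^(2\<times>2)"
  assumes "(norm \<phi>)\<^sup>2 + (norm \<xi>)\<^sup>2 = 1" "norm \<xi> \<le> norm \<phi>" "norm \<xi> = norm \<phi> \<Longrightarrow> cinner \<phi> \<xi> \<noteq> 0"
  shows "\<exists>U a0 b0 a1 b1. unitary_mat U
    \<and> U *v \<phi> = a0 *s bell_plus + b0 *s bell_minus \<and> U *v \<xi> = a1 *s bell_plus + b1 *s bell_minus
    \<and> (cmod a0)\<^sup>2 + (cmod a1)\<^sup>2 + ((cmod b0)\<^sup>2 + (cmod b1)\<^sup>2) = 1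
    \<and> (cmod b0)\<^sup>2 + (cmod b1)\<^sup>2 < (cmod a0)\<^sup>2 + (cmod a1)\<^sup>2"
proof -
  have "\<phi> \<noteq> 0"
    using assms(1,2) by (auto simp: power2_eq_square)
  then obtain y1 y2 c0 c1 c2 where y: "cinner y1 y1 = 1" "cinner y2 y2 = 1" "cinner y1 y2 = 0"
    and \<phi>: "\<phi> = c0 *s y1" and \<xi>: "\<xi> = c1 *s y1 + c2 *s y2"
    using orthonormal_pair_spanning by blast
  obtain U w1 w2 where U: "unitary_mat U" "cmod w1 = 1" "cmod w2 = 1"
    "U *v y1 = w1 *s bell_plus" "U *v y2 = w2 *s bell_minus"
    using unitary_maps_orthonormal_pair[OF y bell_orthonormal] by blast
  have y21: "cinner y2 y1 = 0" using y(3) cinner_commute[of y1 y2] by simp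
  have "complex_of_real ((norm \<phi>)\<^sup>2) = complex_of_real ((cmod c0)\<^sup>2)"
    unfolding cinner_self[symmetric] cnj_mult_self[symmetric] \<phi> by (simp add: cinner_simps y)
  then have n\<phi>: "(norm \<phi>)\<^sup>2 = (cmod c0)\<^sup>2" by (simp only: of_real_eq_iff)
  have "complex_of_real ((norm \<xi>)\<^sup>2) = complex_of_real ((cmod c1)\<^sup>2 + (cmod c2)\<^sup>2)"
    unfolding cinner_self[symmetric] of_real_add cnj_mult_self[symmetric] \<xi>
    by (simp add: cinner_simps y y21)
  then have n\<xi>: "(norm \<xi>)\<^sup>2 = (cmod c1)\<^sup>2 + (cmod c2)\<^sup>2" by (simp only: of_real_eq_iff)
  have "cinner \<phi> \<xi> = cnj c0 * c1" by (simp add: \<phi> \<xi> cinner_simps y)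
  then have c1: "c1 \<noteq> 0" if "norm \<xi> = norm \<phi>" using assms(3) that by auto
  have "(cmod c2)\<^sup>2 < (cmod c0)\<^sup>2 + (cmod c1)\<^sup>2"
  proof (cases "norm \<xi> = norm \<phi>")
    case True
    then show ?thesis using n\<phi> n\<xi> c1 by simp
  next
    case False
    then have "(norm \<xi>)\<^sup>2 < (norm \<phi>)\<^sup>2" using assms(2) by (simp add: power_strict_mono)
    then show ?thesis using n\<phi> n\<xi> zero_le_power2[of "cmod c1"] by linarith
  qed
  moreover have "U *v \<phi> = (c0 * w1) *s bell_plus + 0 *s bell_minus"
    by (simp add: \<phi> vector_scalar_commute U(4) vector_smult_assoc)
  moreover have "U *v \<xi> = (c1 * w1) *s bell_plus + (c2 * w2) *s bell_minus"
    by (simp add: \<xi> matrix_vector_right_distrib vector_scalar_commute U(4,5) vector_smult_assoc)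
  ultimately show ?thesis
    using U(1-3) assms(1) n\<phi> n\<xi>
    by (intro exI[of _ U] exI[of _ "c0 * w1"] exI[of _ 0] exI[of _ "c1 * w1"] exI[of _ "c2 * w2"])
      (simp add: norm_mult)
qed

lemma sqrt3_less_sqrt_add:
  fixes t :: real
  assumes "0 < t" "t \<le> 1"
  shows "sqrt 3 < sqrt (3 - 2 * t) + 2 * t"
proof -
  have "3/2 < sqrt 3" by (rule real_less_rsqrt) (simp add: power2_eq_square)
  then have "t * (4 * t - 4 * sqrt 3 + 2) < 0" using assms by (intro mult_pos_neg) linarith+
  then have "(sqrt 3 - 2 * t)\<^sup>2 < 3 - 2 * t"
    by (simp add: power2_eq_square algebra_simps)
  then show ?thesis using real_less_rsqrt by force
qed

lemma correlation_exceeds_sqrt3: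
  fixes \<phi> \<xi> :: "complex^(2\<times>2)"
  assumes "(norm \<phi>)\<^sup>2 + (norm \<xi>)\<^sup>2 = 1" "norm \<xi> \<le> norm \<phi>" "norm \<xi> = norm \<phi> \<Longrightarrow> cinner \<phi> \<xi> \<noteq> 0"
  shows "\<exists>U u v. unitary_mat U \<and> unit_triple u \<and> orthonormal_triple v
    \<and> sqrt 3 < cmod (mtrace ((outer (U *v \<phi>) + outer (U *v \<xi>)) ** correlation_operator u v))"
proof -
  obtain U a0 b0 a1 b1 where U: "unitary_mat U"
    "U *v \<phi> = a0 *s bell_plus + b0 *s bell_minus" "U *v \<xi> = a1 *s bell_plus + b1 *s bell_minus"
    and weights: "(cmod a0)\<^sup>2 + (cmod a1)\<^sup>2 + ((cmod b0)\<^sup>2 + (cmod b1)\<^sup>2) = 1"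
      "(cmod b0)\<^sup>2 + (cmod b1)\<^sup>2 < (cmod a0)\<^sup>2 + (cmod a1)\<^sup>2"
    using unitary_to_bell_span[OF assms] by blast
  define A where "A = (cmod a0)\<^sup>2 + (cmod a1)\<^sup>2"
  define B where "B = (cmod b0)\<^sup>2 + (cmod b1)\<^sup>2"
  define t where "t = A - B"
  have "0 \<le> B" by (simp add: B_def)
  then have t: "0 < t" "t \<le> 1" using weights unfolding t_def A_def B_def by linarith+
  then have t2: "0 < t\<^sup>2" "t\<^sup>2 \<le> 1" by (simp_all add: power_le_one)
  define e where "e = sqrt (3 - 2 * t\<^sup>2)"
  have "2 * t\<^sup>2 + e\<^sup>2 = 3" using t2 by (simp add: e_def)
  then have u: "unit_triple (frame_u t e)" by (rule frame_u_unit)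
  define W where "W = correlation_operator (frame_u t e) frame_v"
  have "mtrace ((outer (U *v \<phi>) + outer (U *v \<xi>)) ** W) = complex_of_real ((e + 2 * t) * A + (e - 2 * t) * B)"
    unfolding U(2,3) W_def A_def B_def by (rule mtrace_frame_bell_pair)
  also have "(e + 2 * t) * A + (e - 2 * t) * B = e + 2 * t\<^sup>2"
  proof -
    have B: "B = 1 - A" using weights(1) by (simp add: A_def B_def)
    show ?thesis unfolding t_def B by (simp add: algebra_simps power2_eq_square)
  qed
  finally have val: "mtrace ((outer (U *v \<phi>) + outer (U *v \<xi>)) ** W) = complex_of_real (e + 2 * t\<^sup>2)" .
  have "0 \<le> e + 2 * t\<^sup>2" using t2 by (simp add: e_def)
  then have "cmod (mtrace ((outer (U *v \<phi>) + outer (U *v \<xi>)) ** W)) = e + 2 * t\<^sup>2"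
    unfolding val norm_of_real by simp
  moreover have "sqrt 3 < e + 2 * t\<^sup>2" unfolding e_def using t2 by (rule sqrt3_less_sqrt_add)
  ultimately show ?thesis
    using U(1) u frame_v_orthonormal unfolding W_def by metis
qed

section \<open>Reduced states of three qubits\<close>

lemma AUS3_iff:
  "\<sigma> \<in> AUS3 \<longleftrightarrow> density_mat \<sigma> \<and> (\<forall>U u v. unitary_mat U \<and> unit_triple u \<and> orthonormal_triple v
    \<longrightarrow> cmod (mtrace (U ** \<sigma> ** cadj U ** correlation_operator u v)) \<le> sqrt 3)"
proof -
  have "(1 / sqrt 3) * c \<le> 1 \<longleftrightarrow> c \<le> sqrt 3" for c :: real
    by (simp add: field_simps)
  then show ?thesis
    unfolding AUS3_def unit_triple_def orthonormal_triple_def correlation_operator_def mtrace_mult_sum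
    by simp
qed

lemma unitary_conj_outer_pair: "U ** (outer a + outer b) ** cadj U = outer (U *v a) + outer (U *v b)"
  by (simp add: matrix_add_ldistrib matrix_add_rdistrib outer_unitary_conj)

lemma outer_pair_in_AUS3_iff:
  fixes a b :: "complex^(2\<times>2)"
  assumes "cinner a a + cinner b b = 1"
  shows "outer a + outer b \<in> AUS3 \<longleftrightarrow> cinner a a = 1/2 \<and> cinner b b = 1/2 \<and> cinner a b = 0"
proof
  assume "outer a + outer b \<in> AUS3"
  then have bound: "cmod (mtrace ((outer (U *v a) + outer (U *v b)) ** correlation_operator u v)) \<le> sqrt 3"
    if "unitary_mat U" "unit_triple u" "orthonormal_triple v" for U u v
    using that by (simp add: AUS3_iff unitary_conj_outer_pair)
  have "complex_of_real ((norm a)\<^sup>2 + (norm b)\<^sup>2) = 1"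
    using assms by (simp only: of_real_add cinner_self[symmetric])
  then have norms: "(norm a)\<^sup>2 + (norm b)\<^sup>2 = 1" by (simp only: of_real_eq_1_iff)
  show "cinner a a = 1/2 \<and> cinner b b = 1/2 \<and> cinner a b = 0"
  proof (rule ccontr)
    assume unbalanced: "\<not> ?thesis"
    have "cinner a b \<noteq> 0" if "norm a = norm b"
    proof -
      have "(norm a)\<^sup>2 = 1/2" "(norm b)\<^sup>2 = 1/2" using norms that by simp_all
      then have "cinner a a = 1/2" "cinner b b = 1/2" by (simp_all only: cinner_self) simp_all
      then show ?thesis using unbalanced by blast
    qed
    then consider "norm b \<le> norm a" "norm b = norm a \<Longrightarrow> cinner a b \<noteq> 0"
      | "norm a \<le> norm b" "norm a = norm b \<Longrightarrow> cinner b a \<noteq> 0"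
      by (metis cinner_commute complex_cnj_zero_iff linear)
    then show False
    proof cases
      case 1
      then show False
        using correlation_exceeds_sqrt3[OF norms 1] bound by (meson not_le)
    next
      case 2
      then show False
        using correlation_exceeds_sqrt3[of b a] norms bound by (metis add.commute not_le)
    qed
  qed
next
  assume "cinner a a = 1/2 \<and> cinner b b = 1/2 \<and> cinner a b = 0"
  then show "outer a + outer b \<in> AUS3"
    using assms
    by (auto simp: AUS3_iff density_mat_outer_pair unitary_conj_outer_pair unitary_cinner
        intro!: correlation_bound_orthogonal_pair)
qed

definition branch :: "complex^('a::finite \<times> 'b::finite) \<Rightarrow> 'b \<Rightarrow> complex^'a" where
  "branch \<Psi> c = (\<chi> x. \<Psi> $ (x, c))"

lemma ptrace2_outer: "ptrace2 (outer \<Psi>) = (\<Sum>c\<in>UNIV. outer (branch \<Psi> c))"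
  by (simp add: ptrace2_def outer_def branch_def vec_eq_iff)

lemma ptrace1_outer: "ptrace1 (outer \<Psi>) = (\<chi> c c'. cinner (branch \<Psi> c') (branch \<Psi> c))"
  by (simp add: ptrace1_def outer_def cinner_def branch_def vec_eq_iff mult.commute)

lemma norm_power2_branches: "(norm \<Psi>)\<^sup>2 = (\<Sum>c\<in>UNIV. (norm (branch \<Psi> c))\<^sup>2)"
proof -
  have "(norm \<Psi>)\<^sup>2 = (\<Sum>x\<in>UNIV. \<Sum>c\<in>UNIV. (norm (\<Psi> $ (x, c)))\<^sup>2)"
    by (simp add: norm_vec_power2 sum_UNIV_prod)
  also have "\<dots> = (\<Sum>c\<in>UNIV. \<Sum>x\<in>UNIV. (norm (\<Psi> $ (x, c)))\<^sup>2)"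
    by (rule sum.swap)
  finally show ?thesis by (simp add: norm_vec_power2 branch_def)
qed

lemma ptrace1_outer_eq_maxmixed2_iff:
  fixes \<Psi> :: "complex^('a::finite \<times> 2)"
  shows "ptrace1 (outer \<Psi>) = maxmixed2 \<longleftrightarrow> cinner (branch \<Psi> 0) (branch \<Psi> 0) = 1/2
    \<and> cinner (branch \<Psi> 1) (branch \<Psi> 1) = 1/2 \<and> cinner (branch \<Psi> 0) (branch \<Psi> 1) = 0"
  unfolding ptrace1_outer maxmixed2_def vec_eq_iff all_2_iff
  by (auto simp: cinner_commute[of "branch \<Psi> 0" "branch \<Psi> 1", symmetric])

theorem theorem5:
  fixes \<Upsilon> :: "complex^((2\<times>2)\<times>2)"
  assumes "norm \<Upsilon> = 1"
  shows "ptrace2 (outer \<Upsilon>) \<in> AUS3 \<longleftrightarrow> ptrace1 (outer \<Upsilon>) = maxmixed2"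
proof -
  have "cinner (branch \<Upsilon> 0) (branch \<Upsilon> 0) + cinner (branch \<Upsilon> 1) (branch \<Upsilon> 1) = 1"
    using assms norm_power2_branches[of \<Upsilon>]
    by (simp only: cinner_self of_real_add[symmetric] sum_UNIV_2) simp
  then have "outer (branch \<Upsilon> 0) + outer (branch \<Upsilon> 1) \<in> AUS3 \<longleftrightarrow> ptrace1 (outer \<Upsilon>) = maxmixed2"
    unfolding ptrace1_outer_eq_maxmixed2_iff by (rule outer_pair_in_AUS3_iff)
  then show ?thesis
    by (simp add: ptrace2_outer sum_UNIV_2)
qed

end
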